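(* Let $\alpha\ge\aleph_0$ be a cardinal, let $X$ be a commutative topological $\alpha$-generated algebra over $\mathbb{K}$ which is first-countable, and let $M\subset X$. Then $M$ is $\alpha$-infinitely strongly $\alpha$-dense-algebrable if and only if $M$ is strongly $\alpha$-dense-algebrable.
   Context: Algebras are associative linear algebras over $\mathbb{K}$ ($\mathbb{R}$ or $\mathbb{C}$); a topological algebra has continuous sum, product and scalar multiplication. An algebra is $\alpha$-generated if $\alpha$ is the smallest cardinality of a subset generating it as an algebra. $\langle S\rangle$ is the subalgebra generated by $S$. With $\mathbb{P}_n$ the polynomials in $n$ variables without constant term, $S$ is a set of free generators (SFG) if $P(x_1,\dots,x_n)\neq0$ for every $n$, every non-zero $P\in\mathbb{P}_n$ and all pairwise distinct $x_1,\dots,x_n\in S$. An $\alpha$-generated free subalgebra is $\langle F\rangle$ with $F$ an SFG of cardinality $\alpha$. $M$ is strongly $\alpha$-dense-algebrable if $M\cup\{0\}$ contains a dense $\alpha$-generated free subalgebra of $X$; $M$ is $\alpha$-infinitely strongly $\alpha$-dense-algebrable if there is a family $\{Y_\kappa\}_{\kappa<\alpha}$ of dense $\alpha$-generated free subalgebras of $X$ with $Y_\kappa\subset M\cup\{0\}$ and $Y_{\kappa_1}\cap Y_{\kappa_2}=\{0\}$ for $\kappa_1\neq\kappa_2$. *)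

theory Defs
  imports "HOL-Analysis.Analysis" "HOL-Library.Equipollence" "HOL-Library.Multiset"
begin

text \<open>The algebra X is the whole type 'a (associative, commutative, not necessarily unital:
  class comm_ring). The scalar field K is a subset of the complex numbers,
  K = \<real> or K = UNIV, and sm is the scalar multiplication (only relevant on K).\<close>

definition topological_algebra :: "complex set \<Rightarrow> (complex \<Rightarrow> 'a::{comm_ring,topological_space} \<Rightarrow> 'a) \<Rightarrow> bool" where
  "topological_algebra K sm \<longleftrightarrow>
     (\<forall>a\<in>K. \<forall>b\<in>K. \<forall>x. sm (a + b) x = sm a x + sm b x) \<and>
     (\<forall>a\<in>K. \<forall>x y. sm a (x + y) = sm a x + sm a y) \<and>
     (\<forall>a\<in>K. \<forall>b\<in>K. \<forall>x. sm (a * b) x = sm a (sm b x)) \<and>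
     (\<forall>x. sm 1 x = x) \<and>
     (\<forall>a\<in>K. \<forall>x y. sm a (x * y) = sm a x * y \<and> sm a (x * y) = x * sm a y) \<and>
     continuous_on UNIV (\<lambda>p::'a \<times> 'a. fst p + snd p) \<and>
     continuous_on UNIV (\<lambda>p::'a \<times> 'a. fst p * snd p) \<and>
     continuous_on (K \<times> UNIV) (\<lambda>p::complex \<times> 'a. sm (fst p) (snd p))"

definition is_subalg :: "complex set \<Rightarrow> (complex \<Rightarrow> 'a \<Rightarrow> 'a) \<Rightarrow> 'a::comm_ring set \<Rightarrow> bool" where
  "is_subalg K sm B \<longleftrightarrow> 0 \<in> B \<and>
     (\<forall>x\<in>B. \<forall>y\<in>B. x + y \<in> B \<and> x - y \<in> B \<and> x * y \<in> B) \<and>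
     (\<forall>c\<in>K. \<forall>x\<in>B. sm c x \<in> B)"

definition gen_alg :: "complex set \<Rightarrow> (complex \<Rightarrow> 'a \<Rightarrow> 'a) \<Rightarrow> 'a::comm_ring set \<Rightarrow> 'a set" where
  "gen_alg K sm S = \<Inter>{B. S \<subseteq> B \<and> is_subalg K sm B}"

text \<open>X is alpha-generated, the cardinal alpha being represented by the set A.\<close>
definition alpha_generated :: "complex set \<Rightarrow> (complex \<Rightarrow> 'a::comm_ring \<Rightarrow> 'a) \<Rightarrow> 'i set \<Rightarrow> bool" where
  "alpha_generated K sm A \<longleftrightarrow>
     (\<exists>G::'a set. gen_alg K sm G = UNIV \<and> G \<approx> A) \<and>
     (\<forall>G::'a set. gen_alg K sm G = UNIV \<longrightarrow> A \<lesssim> G)"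

fun lprod :: "'a::semigroup_mult list \<Rightarrow> 'a" where
  "lprod [] = undefined"
| "lprod [x] = x"
| "lprod (x # y # ys) = x * lprod (y # ys)"

definition monom_eval :: "(nat \<Rightarrow> 'a::comm_ring) \<Rightarrow> nat multiset \<Rightarrow> 'a" where
  "monom_eval x m = lprod (map x (sorted_list_of_multiset m))"

text \<open>A polynomial in P_n (n variables, coefficients in K, no constant term) is given by a
  finite set S of non-constant monomials in the variables 0..n-1 and coefficients c on S.\<close>
definition is_poly_n :: "complex set \<Rightarrow> nat \<Rightarrow> nat multiset set \<Rightarrow> (nat multiset \<Rightarrow> complex) \<Rightarrow> bool" where
  "is_poly_n K n S c \<longleftrightarrow> finite S \<and> (\<forall>m\<in>S. m \<noteq> {#} \<and> set_mset m \<subseteq> {..<n} \<and> c m \<in> K)"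

definition poly_nonzero :: "nat multiset set \<Rightarrow> (nat multiset \<Rightarrow> complex) \<Rightarrow> bool" where
  "poly_nonzero S c \<longleftrightarrow> (\<exists>m\<in>S. c m \<noteq> 0)"

definition poly_eval :: "(complex \<Rightarrow> 'a \<Rightarrow> 'a) \<Rightarrow> nat multiset set \<Rightarrow> (nat multiset \<Rightarrow> complex)
    \<Rightarrow> (nat \<Rightarrow> 'a::comm_ring) \<Rightarrow> 'a" where
  "poly_eval sm S c x = (\<Sum>m\<in>S. sm (c m) (monom_eval x m))"

definition SFG :: "complex set \<Rightarrow> (complex \<Rightarrow> 'a \<Rightarrow> 'a) \<Rightarrow> 'a::comm_ring set \<Rightarrow> bool" where
  "SFG K sm F \<longleftrightarrow>
     (\<forall>n S c x. is_poly_n K n S c \<and> poly_nonzero S c \<and> inj_on x {..<n} \<and> x ` {..<n} \<subseteq> F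
        \<longrightarrow> poly_eval sm S c x \<noteq> 0)"

definition dense_free_subalg :: "complex set \<Rightarrow> (complex \<Rightarrow> 'a::{comm_ring,topological_space} \<Rightarrow> 'a) \<Rightarrow> 'i set \<Rightarrow> 'a set \<Rightarrow> bool" where
  "dense_free_subalg K sm A Y \<longleftrightarrow>
     (\<exists>F::'a set. SFG K sm F \<and> F \<approx> A \<and> Y = gen_alg K sm F) \<and>
     closure Y = UNIV"

definition strongly_dense_algebrable :: "complex set \<Rightarrow> (complex \<Rightarrow> 'a::{comm_ring,topological_space} \<Rightarrow> 'a) \<Rightarrow> 'i set \<Rightarrow> 'a set \<Rightarrow> bool" where
  "strongly_dense_algebrable K sm A M \<longleftrightarrow>
     (\<exists>Y::'a set. dense_free_subalg K sm A Y \<and> Y \<subseteq> M \<union> {0})"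

definition inf_strongly_dense_algebrable :: "complex set \<Rightarrow> (complex \<Rightarrow> 'a::{comm_ring,topological_space} \<Rightarrow> 'a) \<Rightarrow> 'i set \<Rightarrow> 'a set \<Rightarrow> bool" where
  "inf_strongly_dense_algebrable K sm A M \<longleftrightarrow>
     (\<exists>Y :: 'i \<Rightarrow> 'a set.
        (\<forall>k\<in>A. dense_free_subalg K sm A (Y k) \<and> Y k \<subseteq> M \<union> {0}) \<and>
        (\<forall>k1\<in>A. \<forall>k2\<in>A. k1 \<noteq> k2 \<longrightarrow> Y k1 \<inter> Y k2 = {0}))"

end

theory Submission
  imports Defs "HOL-Library.Poly_Mapping"
begin

text \<open>Let \<open>F\<close> be a free set of \<open>\<alpha>\<close> generators of a dense subalgebra contained in
  \<open>M \<union> {0}\<close>. Index \<open>F\<close> by the nodes of a forest in which every node \<open>v\<close> has a child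
  \<open>c(v,k,n)\<close> for each \<open>k \<in> A\<close> and \<open>n \<in> \<nat>\<close>. By first countability there are nonzero
  scalars \<open>t(v,k,n)\<close> with \<open>t(v,k,n) c(v,k,n) \<longrightarrow> 0\<close> as \<open>n \<longrightarrow> \<infinity>\<close>, so the elements
  \<open>v + t(v,k,n) c(v,k,n)\<close> of the \<open>k\<close>-th piece approximate every \<open>v \<in> F\<close>; hence each piece
  generates a dense subalgebra of \<open>\<langle>F\<rangle>\<close>. The substitution
  \<open>x\<^sub>v \<mapsto> x\<^sub>v + t x\<^sub>c\<close> can be inverted level by level along the forest, so the union of
  all pieces is still free, and disjoint parts of one free set generate subalgebras that meet only
  in \<open>0\<close>.\<close>

section \<open>Constant-free polynomials\<close>

text \<open>The algebra need not have a unit, so products over a multiset are only formed for nonempty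
  multisets; \<open>None\<close> stands for the empty product during the fold.\<close>

definition mprod_step :: "('v \<Rightarrow> 'b::comm_ring) \<Rightarrow> 'v \<Rightarrow> 'b option \<Rightarrow> 'b option" where
  "mprod_step x v r = Some (case r of None \<Rightarrow> x v | Some y \<Rightarrow> x v * y)"

interpretation mprod_step: comp_fun_commute "mprod_step x"
  by unfold_locales
    (auto simp: mprod_step_def fun_eq_iff mult.left_commute mult.commute split: option.splits)

definition mprod :: "('v \<Rightarrow> 'b::comm_ring) \<Rightarrow> 'v multiset \<Rightarrow> 'b" where
  "mprod x m = the (fold_mset (mprod_step x) None m)"

lemma mprod_singleton [simp]: "mprod x {#v#} = x v"
  by (simp add: mprod_def mprod_step_def)

lemma mprod_add_mset: "m \<noteq> {#} \<Longrightarrow> mprod x (add_mset v m) = x v * mprod x m"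
  by (cases m) (simp_all add: mprod_def mprod_step_def)

lemma mprod_plus: "m \<noteq> {#} \<Longrightarrow> m' \<noteq> {#} \<Longrightarrow> mprod x (m + m') = mprod x m * mprod x m'"
proof (induction m)
  case (add v m)
  then show ?case
    by (cases "m = {#}") (simp_all add: mprod_add_mset mult.assoc)
qed simp

lemma mprod_cong: "(\<And>v. v \<in># m \<Longrightarrow> x v = y v) \<Longrightarrow> mprod x m = mprod y m"
proof (induction m)
  case (add v m)
  then show ?case
    by (cases "m = {#}") (simp_all add: mprod_add_mset)
qed (simp add: mprod_def)

lemma lprod_insort:
  "xs \<noteq> [] \<Longrightarrow> lprod (map x (insort a xs)) = (x a :: 'b::comm_ring) * lprod (map x xs)"
proof (induction xs)
  case (Cons b xs)
  then show ?case
    by (cases xs) (auto simp: mult.left_commute mult.commute)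
qed simp

lemma monom_eval_eq_mprod: "m \<noteq> {#} \<Longrightarrow> monom_eval x m = mprod x m"
proof (induction m)
  case (add a m)
  show ?case
  proof (cases "m = {#}")
    case False
    then have "sorted_list_of_multiset m \<noteq> []"
      by (metis mset_sorted_list_of_multiset mset.simps(1))
    with add False show ?thesis
      by (simp add: monom_eval_def lprod_insort mprod_add_mset)
  qed (simp add: monom_eval_def)
qed simp

type_synonym ('v, 'c) cpoly = "'v multiset \<Rightarrow>\<^sub>0 'c"

definition const_free :: "('v, 'c::zero) cpoly \<Rightarrow> bool" where
  "const_free p \<longleftrightarrow> {#} \<notin> Poly_Mapping.keys p"

definition poly_vars :: "('v, 'c::zero) cpoly \<Rightarrow> 'v set" where
  "poly_vars p = (\<Union>m\<in>Poly_Mapping.keys p. set_mset m)"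

definition polys_over :: "'v set \<Rightarrow> ('v, 'c::zero) cpoly set" where
  "polys_over G = {p. const_free p \<and> poly_vars p \<subseteq> G}"

definition pvar :: "'v \<Rightarrow> ('v, 'c::comm_ring_1) cpoly" where
  "pvar v = Poly_Mapping.single {#v#} 1"

definition pscale :: "'c::comm_ring_1 \<Rightarrow> ('v, 'c) cpoly \<Rightarrow> ('v, 'c) cpoly" where
  "pscale a p = Poly_Mapping.single {#} a * p"

text \<open>Evaluation ignores the constant term, as the algebra need not have a unit.\<close>

definition peval :: "('c::zero \<Rightarrow> 'b::comm_ring \<Rightarrow> 'b) \<Rightarrow> ('v \<Rightarrow> 'b) \<Rightarrow> ('v, 'c) cpoly \<Rightarrow> 'b" where
  "peval sc x p = (\<Sum>m\<in>Poly_Mapping.keys p - {{#}}. sc (Poly_Mapping.lookup p m) (mprod x m))"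

lemma lookup_pscale [simp]: "Poly_Mapping.lookup (pscale a p) m = a * Poly_Mapping.lookup p m"
  unfolding pscale_def mult_map_scale_conv_mult[symmetric]
  by (simp add: map.rep_eq when_def)

lemma poly_mapping_sum_single: "p = (\<Sum>m\<in>Poly_Mapping.keys p. Poly_Mapping.single m (Poly_Mapping.lookup p m))"
  by (rule poly_mapping_eqI) (simp add: lookup_sum lookup_single when_def in_keys_iff)

lemma const_free_zero [simp]: "const_free 0"
  by (simp add: const_free_def)

lemma const_free_add: "const_free p \<Longrightarrow> const_free q \<Longrightarrow> const_free (p + q)"
  by (simp add: const_free_def in_keys_iff lookup_add)

lemma const_free_diff: "const_free p \<Longrightarrow> const_free q \<Longrightarrow> const_free (p - q)"
  by (simp add: const_free_def in_keys_iff lookup_minus)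

lemma const_free_mult: "const_free p \<Longrightarrow> const_free (p * q)"
  using keys_mult[of p q] by (auto simp: const_free_def)

lemma const_free_pscale: "const_free p \<Longrightarrow> const_free (pscale a p)"
  by (simp add: const_free_def in_keys_iff)

lemma const_free_pvar: "const_free (pvar v)"
  by (simp add: const_free_def pvar_def)

lemma const_free_sum: "(\<And>i. i \<in> I \<Longrightarrow> const_free (f i)) \<Longrightarrow> const_free (\<Sum>i\<in>I. f i)"
  by (induction I rule: infinite_finite_induct) (auto simp: const_free_add)

lemma const_free_no_vars_eq_0:
  assumes "const_free p" "poly_vars p = {}"
  shows "p = 0"
proof -
  have "m = {#}" if "m \<in> Poly_Mapping.keys p" for m
    using that assms(2) by (auto simp: poly_vars_def)
  then show ?thesis
    using assms(1) by (metis const_free_def ex_in_conv keys_eq_empty)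
qed

lemma finite_poly_vars: "finite (poly_vars p)"
  by (simp add: poly_vars_def)

lemma poly_vars_add: "poly_vars (p + q) \<subseteq> poly_vars p \<union> poly_vars q"
  using keys_add[of p q] by (auto simp: poly_vars_def)

lemma poly_vars_diff: "poly_vars (p - q) \<subseteq> poly_vars p \<union> poly_vars (q :: ('v, 'c::ab_group_add) cpoly)"
  using poly_vars_add[of p "- q"] by (simp add: poly_vars_def)

lemma poly_vars_mult: "poly_vars (p * q) \<subseteq> poly_vars p \<union> poly_vars q"
  using keys_mult[of p q] by (fastforce simp: poly_vars_def)

lemma poly_vars_pscale: "poly_vars (pscale a p) \<subseteq> poly_vars p"
  unfolding poly_vars_def by (rule UN_mono) (auto simp: in_keys_iff)

lemma poly_vars_pvar [simp]: "poly_vars (pvar v :: ('v, 'c::comm_ring_1) cpoly) = {v}"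
  by (simp add: poly_vars_def pvar_def)

lemma poly_vars_sum: "poly_vars (\<Sum>i\<in>I. f i) \<subseteq> (\<Union>i\<in>I. poly_vars (f i))"
proof (induction I rule: infinite_finite_induct)
  case (insert i I)
  then show ?case using poly_vars_add[of "f i" "sum f I"] by auto
qed (auto simp: poly_vars_def)

lemma pvar_inject: "(pvar v :: ('v, 'c::comm_ring_1) cpoly) = pvar w \<longleftrightarrow> v = w"
  using poly_vars_pvar[of v] poly_vars_pvar[of w] by (metis singleton_inject)

lemma polys_over_zero [simp]: "0 \<in> polys_over G"
  by (simp add: polys_over_def poly_vars_def)

lemma polys_over_add: "p \<in> polys_over G \<Longrightarrow> q \<in> polys_over G \<Longrightarrow> p + q \<in> polys_over G"
  using poly_vars_add[of p q] by (auto simp: polys_over_def const_free_add)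

lemma polys_over_diff:
  "p \<in> polys_over G \<Longrightarrow> q \<in> polys_over G \<Longrightarrow> p - q \<in> polys_over (G :: 'v set)"
  for p q :: "('v, 'c::ab_group_add) cpoly"
  using poly_vars_diff[of p q] by (auto simp: polys_over_def const_free_diff)

lemma polys_over_mult: "p \<in> polys_over G \<Longrightarrow> q \<in> polys_over G \<Longrightarrow> p * q \<in> polys_over G"
  using poly_vars_mult[of p q] by (auto simp: polys_over_def const_free_mult)

lemma polys_over_pscale: "p \<in> polys_over G \<Longrightarrow> pscale a p \<in> polys_over G"
  using poly_vars_pscale[of a p] by (auto simp: polys_over_def const_free_pscale)

lemma polys_over_pvar: "v \<in> G \<Longrightarrow> pvar v \<in> polys_over G"
  by (simp add: polys_over_def const_free_pvar)

lemma polys_over_mono: "G \<subseteq> H \<Longrightarrow> polys_over G \<subseteq> polys_over H"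
  by (auto simp: polys_over_def)

locale algebra_module = module sc
  for sc :: "'c::comm_ring_1 \<Rightarrow> 'b::comm_ring \<Rightarrow> 'b" +
  assumes scale_mult_left: "sc a (x * y) = sc a x * y"
begin

lemma scale_mult_right: "sc a (x * y) = x * sc a y"
  by (metis mult.commute scale_mult_left)

lemma peval_superset:
  assumes "finite S" "Poly_Mapping.keys p - {{#}} \<subseteq> S" "{#} \<notin> S"
  shows "peval sc x p = (\<Sum>m\<in>S. sc (Poly_Mapping.lookup p m) (mprod x m))"
  unfolding peval_def
  by (rule sum.mono_neutral_left) (use assms in \<open>auto simp: in_keys_iff\<close>)

lemma peval_zero [simp]: "peval sc x 0 = 0"
  by (simp add: peval_def)

lemma peval_add: "peval sc x (p + q) = peval sc x p + peval sc x q"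
proof -
  let ?S = "(Poly_Mapping.keys p \<union> Poly_Mapping.keys q) - {{#}}"
  have "peval sc x (p + q) = (\<Sum>m\<in>?S. sc (Poly_Mapping.lookup (p + q) m) (mprod x m))"
    by (rule peval_superset) (use keys_add[of p q] in auto)
  also have "\<dots> = (\<Sum>m\<in>?S. sc (Poly_Mapping.lookup p m) (mprod x m))
      + (\<Sum>m\<in>?S. sc (Poly_Mapping.lookup q m) (mprod x m))"
    by (simp add: lookup_add scale_left_distrib sum.distrib)
  also have "\<dots> = peval sc x p + peval sc x q"
    by (subst (1 2) peval_superset[where S = ?S]) auto
  finally show ?thesis .
qed

lemma peval_diff: "peval sc x (p - q) = peval sc x p - peval sc x q"
  using peval_add[of x "p - q" q] by (simp add: algebra_simps)

lemma peval_sum: "peval sc x (\<Sum>i\<in>I. f i) = (\<Sum>i\<in>I. peval sc x (f i))"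
  by (induction I rule: infinite_finite_induct) (auto simp: peval_add)

lemma peval_single:
  "peval sc x (Poly_Mapping.single m c) = (if m = {#} then 0 else sc c (mprod x m))"
  by (cases "c = 0") (auto simp: peval_def)

lemma peval_pvar [simp]: "peval sc x (pvar v) = x v"
  by (simp add: pvar_def peval_single)

lemma peval_pscale: "peval sc x (pscale a p) = sc a (peval sc x p)"
proof -
  have "peval sc x (pscale a p)
      = (\<Sum>m\<in>Poly_Mapping.keys p - {{#}}. sc (Poly_Mapping.lookup (pscale a p) m) (mprod x m))"
    by (rule peval_superset) (auto simp: in_keys_iff)
  then show ?thesis
    by (simp add: peval_def scale_sum_right)
qed

lemma peval_mult:
  assumes "const_free p" "const_free q"
  shows "peval sc x (p * q) = peval sc x p * peval sc x q"
proof -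
  let ?P = "Poly_Mapping.keys p" and ?Q = "Poly_Mapping.keys q"
  let ?p = "Poly_Mapping.lookup p" and ?q = "Poly_Mapping.lookup q"
  have no_const: "{#} \<notin> ?P" "{#} \<notin> ?Q"
    using assms by (auto simp: const_free_def)
  have "p * q = (\<Sum>a\<in>?P. \<Sum>b\<in>?Q. Poly_Mapping.single (a + b) (?p a * ?q b))"
    by (subst (1 2) poly_mapping_sum_single) (simp add: sum_product mult_single)
  then have "peval sc x (p * q) = (\<Sum>a\<in>?P. \<Sum>b\<in>?Q. sc (?p a * ?q b) (mprod x (a + b)))"
    using no_const by (auto simp: peval_sum peval_single intro!: sum.cong)
  also have "\<dots> = (\<Sum>a\<in>?P. \<Sum>b\<in>?Q. sc (?p a) (mprod x a) * sc (?q b) (mprod x b))"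
    using no_const
    by (intro sum.cong refl) (metis mprod_plus scale_mult_left scale_mult_right scale_scale)
  also have "\<dots> = peval sc x p * peval sc x q"
    using no_const by (simp add: peval_def sum_product)
  finally show ?thesis .
qed

end

lemma peval_cong: "(\<And>v. v \<in> poly_vars p \<Longrightarrow> x v = y v) \<Longrightarrow> peval sc x p = peval sc y p"
  unfolding peval_def
  by (intro sum.cong refl arg_cong[where f = "sc _"] mprod_cong) (auto simp: poly_vars_def)

interpretation pscale: algebra_module "pscale :: 'c::comm_ring_1 \<Rightarrow> ('v, 'c) cpoly \<Rightarrow> _"
  by unfold_locales (simp_all add: pscale_def algebra_simps single_add mult_single)

lemma const_free_mprod:
  "(\<And>v. const_free (l v)) \<Longrightarrow> m \<noteq> {#} \<Longrightarrow> const_free (mprod l m)"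
proof (induction m)
  case (add v m)
  then show ?case
    by (cases "m = {#}") (simp_all add: mprod_add_mset const_free_mult)
qed simp

lemma const_free_subst: "(\<And>v. const_free (l v)) \<Longrightarrow> const_free (peval pscale l p)"
  unfolding peval_def by (intro const_free_sum const_free_pscale const_free_mprod) auto

lemma poly_vars_mprod:
  "m \<noteq> {#} \<Longrightarrow> poly_vars (mprod l m) \<subseteq> (\<Union>v\<in>set_mset m. poly_vars (l v))"
proof (induction m)
  case (add v m)
  show ?case
  proof (cases "m = {#}")
    case False
    then have "poly_vars (mprod l (add_mset v m)) \<subseteq> poly_vars (l v) \<union> poly_vars (mprod l m)"
      by (simp add: mprod_add_mset poly_vars_mult)
    with add.IH False show ?thesis by auto
  qed simp
qed simp

lemma poly_vars_subst: "poly_vars (peval pscale l p) \<subseteq> (\<Union>v\<in>poly_vars p. poly_vars (l v))"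
proof -
  have "poly_vars (peval pscale l p)
      \<subseteq> (\<Union>m\<in>Poly_Mapping.keys p - {{#}}. poly_vars (pscale (Poly_Mapping.lookup p m) (mprod l m)))"
    unfolding peval_def by (rule poly_vars_sum)
  also have "\<dots> \<subseteq> (\<Union>m\<in>Poly_Mapping.keys p - {{#}}. \<Union>v\<in>set_mset m. poly_vars (l v))"
    by (intro UN_mono subset_refl subset_trans[OF poly_vars_pscale poly_vars_mprod]) simp
  also have "\<dots> \<subseteq> (\<Union>v\<in>poly_vars p. poly_vars (l v))"
    by (auto simp: poly_vars_def)
  finally show ?thesis .
qed

lemma subst_polys_over:
  "(\<And>v. const_free (l v)) \<Longrightarrow> (\<And>v. v \<in> poly_vars p \<Longrightarrow> l v \<in> polys_over G)
    \<Longrightarrow> peval pscale l p \<in> polys_over G"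
  using poly_vars_subst[of l p] by (fastforce simp: polys_over_def const_free_subst)

lemma mprod_pvar: "m \<noteq> {#} \<Longrightarrow> mprod pvar m = Poly_Mapping.single m (1::'c::comm_ring_1)"
proof (induction m)
  case (add v m)
  then show ?case
    by (cases "m = {#}") (simp_all add: mprod_add_mset pvar_def mult_single)
qed simp

lemma subst_pvar:
  assumes "const_free p"
  shows "peval pscale pvar p = p"
proof -
  have "peval pscale pvar p
      = (\<Sum>m\<in>Poly_Mapping.keys p - {{#}}. Poly_Mapping.single m (Poly_Mapping.lookup p m))"
    unfolding peval_def by (intro sum.cong refl) (simp add: mprod_pvar pscale_def mult_single)
  also have "\<dots> = p"
    using assms poly_mapping_sum_single[of p] by (simp add: const_free_def)
  finally show ?thesis .
qed

context algebra_module
begin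

lemma peval_mprod:
  "(\<And>v. const_free (l v)) \<Longrightarrow> m \<noteq> {#}
    \<Longrightarrow> peval sc x (mprod l m) = mprod (\<lambda>v. peval sc x (l v)) m"
proof (induction m)
  case (add v m)
  then show ?case
    by (cases "m = {#}") (simp_all add: mprod_add_mset peval_mult const_free_mprod)
qed simp

lemma peval_subst:
  assumes "\<And>v. const_free (l v)"
  shows "peval sc x (peval pscale l p) = peval sc (\<lambda>v. peval sc x (l v)) p"
proof -
  have "peval sc x (peval pscale l p) = (\<Sum>m\<in>Poly_Mapping.keys p - {{#}}.
      sc (Poly_Mapping.lookup p m) (peval sc x (mprod l m)))"
    unfolding peval_def[of pscale] by (simp add: peval_sum peval_pscale)
  also have "\<dots> = peval sc (\<lambda>v. peval sc x (l v)) p"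
    unfolding peval_def[of sc "\<lambda>v. peval sc x (l v)"] by (intro sum.cong refl) (simp add: peval_mprod assms)
  finally show ?thesis .
qed

end

definition rename :: "('v \<Rightarrow> 'w) \<Rightarrow> ('v, 'c::comm_ring_1) cpoly \<Rightarrow> ('w, 'c) cpoly" where
  "rename f p = peval pscale (\<lambda>v. pvar (f v)) p"

lemma (in algebra_module) peval_rename: "peval sc x (rename f p) = peval sc (\<lambda>v. x (f v)) p"
  by (simp add: rename_def peval_subst const_free_pvar)

lemma rename_polys_over:
  "(\<And>v. v \<in> poly_vars p \<Longrightarrow> f v \<in> G) \<Longrightarrow> rename f p \<in> polys_over G"
  unfolding rename_def
  by (rule subst_polys_over) (auto simp: const_free_pvar polys_over_def)

lemma rename_rename:
  assumes "const_free p" "\<And>v. v \<in> poly_vars p \<Longrightarrow> g (f v) = v"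
  shows "rename g (rename f p) = p"
proof -
  have "rename g (rename f p) = peval pscale (\<lambda>v. pvar (g (f v))) p"
    unfolding rename_def[of g] by (rule pscale.peval_rename)
  also have "\<dots> = peval pscale pvar p"
    using assms(2) by (intro peval_cong) simp
  finally show ?thesis
    using subst_pvar[OF assms(1)] by simp
qed

section \<open>Algebraic independence\<close>

definition alg_independent :: "('c::comm_ring_1 \<Rightarrow> 'b::comm_ring \<Rightarrow> 'b) \<Rightarrow> 'b set \<Rightarrow> bool" where
  "alg_independent sc G \<longleftrightarrow> (\<forall>p \<in> polys_over G. peval sc id p = 0 \<longrightarrow> p = 0)"

lemma alg_independent_subset: "alg_independent sc G \<Longrightarrow> H \<subseteq> G \<Longrightarrow> alg_independent sc H"
  using polys_over_mono unfolding alg_independent_def by blast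

context algebra_module
begin

lemma alg_independent_inj_on:
  assumes "alg_independent sc G"
  shows "inj_on (peval sc id) (polys_over G)"
proof (rule inj_onI)
  fix p q assume "p \<in> polys_over G" "q \<in> polys_over G" "peval sc id p = peval sc id q"
  then have "p - q \<in> polys_over G" "peval sc id (p - q) = 0"
    by (simp_all add: polys_over_diff peval_diff)
  then have "p - q = 0"
    using assms unfolding alg_independent_def by blast
  then show "p = q" by simp
qed

lemma peval_image_Int_eq_zero:
  assumes "alg_independent sc H" "G1 \<subseteq> H" "G2 \<subseteq> H" "G1 \<inter> G2 = {}"
  shows "peval sc id ` polys_over G1 \<inter> peval sc id ` polys_over G2 = {0}"
proof -
  have "p = 0" if "p \<in> polys_over G1" "q \<in> polys_over G2" "peval sc id p = peval sc id q" for p q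
  proof -
    have "p = q"
      using alg_independent_inj_on[OF assms(1)] polys_over_mono[of G1 H] polys_over_mono[of G2 H]
        that assms(2,3) by (blast dest: inj_onD)
    then have "poly_vars p = {}"
      using that assms(4) by (auto simp: polys_over_def)
    then show "p = 0"
      using that(1) const_free_no_vars_eq_0 by (auto simp: polys_over_def)
  qed
  then show ?thesis
    by (fastforce intro: image_eqI[of 0 _ 0])
qed

lemma alg_independent_subst_image:
  fixes L :: "'t \<Rightarrow> ('b, 'c) cpoly" and psi :: "'b \<Rightarrow> ('t, 'c) cpoly"
  assumes indep: "alg_independent sc F"
    and L: "\<And>t. const_free (L t)" "\<And>t. t \<in> T \<Longrightarrow> poly_vars (L t) \<subseteq> F"
    and left_inverse: "\<And>t. t \<in> T \<Longrightarrow> peval pscale psi (L t) = pvar t"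
  shows "inj_on (\<lambda>t. peval sc id (L t)) T"
    and "alg_independent sc ((\<lambda>t. peval sc id (L t)) ` T)"
proof -
  define h where "h t = peval sc id (L t)" for t
  have L_over: "L t \<in> polys_over F" if "t \<in> T" for t
    using L that by (simp add: polys_over_def)
  show "inj_on h T"
  proof (rule inj_onI)
    fix s t assume "s \<in> T" "t \<in> T" "h s = h t"
    then have "L s = L t"
      using alg_independent_inj_on[OF indep] L_over by (auto simp: h_def dest: inj_onD)
    then show "s = t"
      using left_inverse \<open>s \<in> T\<close> \<open>t \<in> T\<close> by (metis pvar_inject)
  qed
  show "alg_independent sc (h ` T)"
    unfolding alg_independent_def
  proof (intro ballI impI)
    fix p assume p: "p \<in> polys_over (h ` T)" and "peval sc id p = 0"
    define g where "g = inv_into T h"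
    define q where "q = rename g p"
    have q_over: "q \<in> polys_over T"
      using p unfolding q_def g_def by (intro rename_polys_over) (auto simp: polys_over_def inv_into_into)
    have p_eq: "p = rename h q"
      using p unfolding q_def g_def
      by (intro rename_rename[symmetric]) (auto simp: polys_over_def f_inv_into_f)
    have "peval sc id (peval pscale L q) = peval sc id p"
      by (simp add: p_eq peval_subst peval_rename L h_def)
    moreover have "peval pscale L q \<in> polys_over F"
      using q_over L_over by (intro subst_polys_over L(1)) (auto simp: polys_over_def)
    ultimately have "peval pscale L q = 0"
      using indep \<open>peval sc id p = 0\<close> by (simp add: alg_independent_def)
    moreover have "peval pscale psi (peval pscale L q) = q"
    proof -
      have "peval pscale psi (peval pscale L q) = peval pscale (\<lambda>t. peval pscale psi (L t)) q"
        by (rule pscale.peval_subst[OF L(1)])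
      also have "\<dots> = peval pscale pvar q"
        using q_over left_inverse by (intro peval_cong) (auto simp: polys_over_def)
      also have "\<dots> = q"
        using q_over by (intro subst_pvar) (simp add: polys_over_def)
      finally show ?thesis .
    qed
    ultimately show "p = 0"
      by (simp add: p_eq rename_def)
  qed
qed

end

section \<open>Topological algebras over the reals or the complex numbers\<close>

lemma gen_alg_is_subalg: "is_subalg K sm (gen_alg K sm G)"
  unfolding gen_alg_def is_subalg_def by auto

lemma subset_gen_alg: "G \<subseteq> gen_alg K sm G"
  unfolding gen_alg_def by auto

lemma gen_alg_least: "is_subalg K sm B \<Longrightarrow> G \<subseteq> B \<Longrightarrow> gen_alg K sm G \<subseteq> B"
  unfolding gen_alg_def by auto

lemma closure_closed_binop:
  assumes "continuous_on UNIV (\<lambda>z. f (fst z) (snd z))"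
    and "\<And>x y. x \<in> B \<Longrightarrow> y \<in> B \<Longrightarrow> f x y \<in> B"
    and "x \<in> closure B" "y \<in> closure B"
  shows "f x y \<in> closure B"
proof -
  have "(\<lambda>z. f (fst z) (snd z)) ` closure (B \<times> B) \<subseteq> closure B"
    by (rule image_closure_subset[OF continuous_on_subset[OF assms(1) subset_UNIV]])
       (use assms(2) closure_subset in fastforce)+
  moreover have "(x, y) \<in> closure (B \<times> B)"
    using assms(3,4) by (simp add: closure_Times)
  ultimately show ?thesis
    by force
qed

text \<open>The scalar field \<open>K\<close> is the image of the field \<open>'c\<close> of polynomial coefficients under
  \<open>emb\<close>: \<open>of_real\<close> for \<open>K = \<real>\<close>, the identity for \<open>K = \<complex>\<close>.\<close>

locale topological_K_algebra =
  fixes K :: "complex set" and sm :: "complex \<Rightarrow> 'a::{comm_ring,first_countable_topology} \<Rightarrow> 'a"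
    and emb :: "'c::field \<Rightarrow> complex"
  assumes topological_algebra: "topological_algebra K sm"
    and emb_add: "emb (a + b) = emb a + emb b"
    and emb_mult: "emb (a * b) = emb a * emb b"
    and emb_one: "emb 1 = 1"
    and inj_emb: "inj emb"
    and K_eq: "K = range emb"
begin

definition smul :: "'c \<Rightarrow> 'a \<Rightarrow> 'a" where
  "smul a x = sm (emb a) x"

sublocale alg: algebra_module smul
  using topological_algebra unfolding topological_algebra_def K_eq
  by unfold_locales (simp_all add: smul_def emb_add emb_mult emb_one)

lemma emb_0 [simp]: "emb 0 = 0"
  using emb_add[of 0 0] by simp

lemma emb_eq_0_iff [simp]: "emb a = 0 \<longleftrightarrow> a = 0"
  using inj_emb emb_0 by (metis injD)

lemma emb_of_nat [simp]: "emb (of_nat n) = of_nat n"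
  by (induction n) (simp_all add: emb_add emb_one)

lemma emb_inverse [simp]: "emb (inverse a) = inverse (emb a)"
proof (cases "a = 0")
  case False
  then have "emb a * emb (inverse a) = 1"
    by (simp flip: emb_mult emb_one)
  then show ?thesis
    by (simp add: inverse_unique)
qed simp

lemma emb_inv_into [simp]: "c \<in> K \<Longrightarrow> emb (inv emb c) = c"
  by (simp add: K_eq f_inv_into_f)

lemma sm_eq_smul: "c \<in> K \<Longrightarrow> sm c x = smul (inv emb c) x"
  by (simp add: smul_def)

lemma peval_image_is_subalg: "is_subalg K sm (peval smul id ` polys_over G)"
  unfolding is_subalg_def
proof (intro conjI ballI)
  show "0 \<in> peval smul id ` polys_over G"
    by (rule image_eqI[of _ _ 0]) simp_all
  fix x y assume "x \<in> peval smul id ` polys_over G" "y \<in> peval smul id ` polys_over G"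
  then obtain p q where pq: "p \<in> polys_over G" "q \<in> polys_over G"
    and xy: "x = peval smul id p" "y = peval smul id q"
    by blast
  show "x + y \<in> peval smul id ` polys_over G"
    using pq by (intro image_eqI[of _ _ "p + q"]) (simp_all add: xy alg.peval_add polys_over_add)
  show "x - y \<in> peval smul id ` polys_over G"
    using pq by (intro image_eqI[of _ _ "p - q"]) (simp_all add: xy alg.peval_diff polys_over_diff)
  show "x * y \<in> peval smul id ` polys_over G"
    using pq polys_over_mult[OF pq] by (intro image_eqI[of _ _ "p * q"])
      (simp_all add: xy alg.peval_mult polys_over_def)
next
  fix c x assume "c \<in> K" "x \<in> peval smul id ` polys_over G"
  then obtain p where "p \<in> polys_over G" "x = peval smul id p"
    by blast
  then show "sm c x \<in> peval smul id ` polys_over G"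
    using \<open>c \<in> K\<close>
    by (intro image_eqI[of _ _ "pscale (inv emb c) p"])
      (simp_all add: sm_eq_smul alg.peval_pscale polys_over_pscale)
qed

lemma gen_alg_subset_peval_image: "gen_alg K sm G \<subseteq> peval smul id ` polys_over G"
  by (rule gen_alg_least[OF peval_image_is_subalg])
    (auto intro!: image_eqI[of _ _ "pvar _"] polys_over_pvar)

lemma gen_alg_Int_eq_zero:
  assumes "alg_independent smul H" "G1 \<subseteq> H" "G2 \<subseteq> H" "G1 \<inter> G2 = {}"
  shows "gen_alg K sm G1 \<inter> gen_alg K sm G2 = {0}"
  using alg.peval_image_Int_eq_zero[OF assms] gen_alg_subset_peval_image[of G1]
    gen_alg_subset_peval_image[of G2] gen_alg_is_subalg[of K sm G1] gen_alg_is_subalg[of K sm G2]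
  by (auto simp: is_subalg_def)

lemma poly_eval_eq_peval:
  assumes "finite S" "{#} \<notin> S" "Poly_Mapping.keys q \<subseteq> S"
    and "\<And>m. m \<in> S \<Longrightarrow> c m = emb (Poly_Mapping.lookup q m)"
  shows "poly_eval sm S c x = peval smul x q"
proof -
  have "peval smul x q = (\<Sum>m\<in>S. smul (Poly_Mapping.lookup q m) (mprod x m))"
    by (rule alg.peval_superset) (use assms in auto)
  also have "\<dots> = poly_eval sm S c x"
    unfolding poly_eval_def smul_def
    by (intro sum.cong refl) (metis assms(2,4) monom_eval_eq_mprod)
  finally show ?thesis
    by simp
qed

lemma SFG_imp_alg_independent:
  assumes "SFG K sm G"
  shows "alg_independent smul G"
  unfolding alg_independent_def
proof (intro ballI impI)
  fix p assume p: "p \<in> polys_over G" and "peval smul id p = 0"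
  define n where "n = card (poly_vars p)"
  obtain x where x: "bij_betw x {..<n} (poly_vars p)"
    using ex_bij_betw_nat_finite[OF finite_poly_vars] by (metis atLeast0LessThan n_def)
  define q where "q = rename (inv_into {..<n} x) p"
  have q_over: "q \<in> polys_over {..<n}"
    using x unfolding q_def bij_betw_def by (intro rename_polys_over) (metis inv_into_into lessThan_iff)
  have p_eq: "p = rename x q"
    using p x unfolding q_def bij_betw_def
    by (intro rename_rename[symmetric]) (simp_all add: polys_over_def f_inv_into_f)
  have "peval smul x q = 0"
    using \<open>peval smul id p = 0\<close> by (simp add: p_eq alg.peval_rename)
  have "q = 0"
  proof (rule ccontr)
    assume "q \<noteq> 0"
    then obtain m where m: "m \<in> Poly_Mapping.keys q"
      by (metis ex_in_conv keys_eq_empty)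
    have "is_poly_n K n (Poly_Mapping.keys q) (\<lambda>m. emb (Poly_Mapping.lookup q m))"
      using q_over K_eq by (auto simp: is_poly_n_def polys_over_def const_free_def poly_vars_def)
    moreover have "poly_nonzero (Poly_Mapping.keys q) (\<lambda>m. emb (Poly_Mapping.lookup q m))"
      using m by (auto simp: poly_nonzero_def in_keys_iff)
    moreover have "inj_on x {..<n}" "x ` {..<n} \<subseteq> G"
      using x p by (auto simp: bij_betw_def polys_over_def)
    ultimately have "poly_eval sm (Poly_Mapping.keys q) (\<lambda>m. emb (Poly_Mapping.lookup q m)) x \<noteq> 0"
      using assms unfolding SFG_def by blast
    moreover have "poly_eval sm (Poly_Mapping.keys q) (\<lambda>m. emb (Poly_Mapping.lookup q m)) x
        = peval smul x q"
      using q_over by (intro poly_eval_eq_peval) (auto simp: polys_over_def const_free_def)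
    ultimately show False
      using \<open>peval smul x q = 0\<close> by simp
  qed
  then show "p = 0"
    by (simp add: p_eq rename_def)
qed

lemma alg_independent_imp_SFG:
  assumes indep: "alg_independent smul G"
  shows "SFG K sm G"
  unfolding SFG_def
proof (intro allI impI, elim conjE)
  fix n S c x
  assume poly: "is_poly_n K n S c" and "poly_nonzero S c"
    and inj: "inj_on x {..<n}" and img: "x ` {..<n} \<subseteq> G"
  have S: "finite S" "{#} \<notin> S" "\<And>m. m \<in> S \<Longrightarrow> set_mset m \<subseteq> {..<n} \<and> c m \<in> K"
    using poly by (auto simp: is_poly_n_def)
  define q :: "(nat, 'c) cpoly" where "q = (\<Sum>m\<in>S. Poly_Mapping.single m (inv emb (c m)))"
  have lookup_q: "Poly_Mapping.lookup q m = (if m \<in> S then inv emb (c m) else 0)" for m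
    using S(1) by (simp add: q_def lookup_sum lookup_single when_def)
  have keys_q: "Poly_Mapping.keys q \<subseteq> S"
    by (auto simp: in_keys_iff lookup_q split: if_splits)
  have q_over: "q \<in> polys_over {..<n}"
    using keys_q S by (fastforce simp: polys_over_def const_free_def poly_vars_def)
  have "q \<noteq> 0"
  proof
    assume "q = 0"
    obtain m where "m \<in> S" "c m \<noteq> 0"
      using \<open>poly_nonzero S c\<close> by (auto simp: poly_nonzero_def)
    with \<open>q = 0\<close> show False
      using lookup_q[of m] emb_inv_into[of "c m"] S(3) by auto
  qed
  have "rename (inv_into {..<n} x) (rename x q) = q"
    using q_over inj by (intro rename_rename) (auto simp: polys_over_def inv_into_f_f)
  then have "rename x q \<noteq> 0"
    using \<open>q \<noteq> 0\<close> by (auto simp: rename_def)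
  moreover have "rename x q \<in> polys_over G"
    using q_over img by (intro rename_polys_over) (auto simp: polys_over_def)
  moreover have "poly_eval sm S c x = peval smul id (rename x q)"
    using S keys_q by (subst poly_eval_eq_peval) (simp_all add: lookup_q alg.peval_rename)
  ultimately show "poly_eval sm S c x \<noteq> 0"
    using indep by (auto simp: alg_independent_def)
qed

lemma continuous_on_add: "continuous_on UNIV (\<lambda>z::'a \<times> 'a. fst z + snd z)"
  and continuous_on_mult: "continuous_on UNIV (\<lambda>z::'a \<times> 'a. fst z * snd z)"
  and continuous_on_sm: "continuous_on (K \<times> UNIV) (\<lambda>z::complex \<times> 'a. sm (fst z) (snd z))"
  using topological_algebra by (simp_all add: topological_algebra_def)

lemma continuous_on_sm_const:
  assumes "c \<in> K"
  shows "continuous_on UNIV (\<lambda>z::'a \<times> 'a. sm c (fst z))"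
proof -
  have "continuous_on UNIV ((\<lambda>z. sm (fst z) (snd z)) \<circ> (\<lambda>z::'a \<times> 'a. (c, fst z)))"
    using assms by (intro continuous_on_compose continuous_intros continuous_on_subset[OF continuous_on_sm])
      auto
  then show ?thesis
    by (simp add: o_def)
qed

lemma tendsto_add_alg: "(f \<longlongrightarrow> (a::'a)) F \<Longrightarrow> (g \<longlongrightarrow> b) F \<Longrightarrow> ((\<lambda>x. f x + g x) \<longlongrightarrow> a + b) F"
  using continuous_on_tendsto_compose[OF continuous_on_add, of "\<lambda>x. (f x, g x)" "(a, b)"]
  by (simp add: tendsto_Pair)

lemma tendsto_sm:
  assumes "(f \<longlongrightarrow> a) F" "(g \<longlongrightarrow> (b::'a)) F" "a \<in> K" "\<forall>\<^sub>F x in F. f x \<in> K"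
  shows "((\<lambda>x. sm (f x) (g x)) \<longlongrightarrow> sm a b) F"
  using continuous_on_tendsto_compose[OF continuous_on_sm, of "\<lambda>x. (f x, g x)" "(a, b)"] assms
  by (simp add: tendsto_Pair)

lemma closure_is_subalg:
  assumes "is_subalg K sm B"
  shows "is_subalg K sm (closure B)"
proof -
  have B: "0 \<in> B" "\<And>x y. x \<in> B \<Longrightarrow> y \<in> B \<Longrightarrow> x + y \<in> B" "\<And>x y. x \<in> B \<Longrightarrow> y \<in> B \<Longrightarrow> x * y \<in> B"
    "\<And>c x. c \<in> K \<Longrightarrow> x \<in> B \<Longrightarrow> sm c x \<in> B"
    using assms by (auto simp: is_subalg_def)
  have add: "x + y \<in> closure B" if "x \<in> closure B" "y \<in> closure B" for x y
    using closure_closed_binop[OF continuous_on_add] B(2) that by simp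
  have scale: "sm c x \<in> closure B" if "c \<in> K" "x \<in> closure B" for c x
    using closure_closed_binop[where f = "\<lambda>x y. sm c x", OF continuous_on_sm_const] B(4) that
    by blast
  have "x - y \<in> closure B" if "x \<in> closure B" "y \<in> closure B" for x y
  proof -
    have "smul (- 1) y \<in> closure B"
      using scale[of "emb (- 1)"] that(2) K_eq by (simp add: smul_def)
    then show ?thesis
      using add[OF that(1), of "- y"] by simp
  qed
  moreover have "x * y \<in> closure B" if "x \<in> closure B" "y \<in> closure B" for x y
    using closure_closed_binop[OF continuous_on_mult] B(3) that by simp
  ultimately show ?thesis
    using B(1) add scale closure_subset[of B] by (auto simp: is_subalg_def)
qed

lemma dense_gen_alg_if_generators_in_closure:
  assumes "F \<subseteq> closure (gen_alg K sm G)" "closure (gen_alg K sm F) = UNIV"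
  shows "closure (gen_alg K sm G) = UNIV"
proof -
  have "gen_alg K sm F \<subseteq> closure (gen_alg K sm G)"
    by (rule gen_alg_least[OF closure_is_subalg[OF gen_alg_is_subalg] assms(1)])
  then show ?thesis
    using assms(2) by (metis closure_closure closure_mono top.extremum_uniqueI)
qed

lemma inverse_of_nat_in_K: "inverse (of_nat n) \<in> K"
  by (metis K_eq emb_inverse emb_of_nat rangeI)

text \<open>The scalars \<open>1 / j\<close> shrink a single vector to \<open>0\<close>; a countable neighbourhood basis at
  \<open>0\<close> lets one choose \<open>j\<close> for the \<open>n\<close>-th vector inside the \<open>n\<close>-th basic neighbourhood.\<close>

lemma obtain_scalars_tendsto_zero:
  fixes e :: "nat \<Rightarrow> 'a"
  obtains c :: "nat \<Rightarrow> 'c" where "\<And>n. c n \<noteq> 0" "(\<lambda>n. smul (c n) (e n)) \<longlonglongrightarrow> 0"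
proof -
  obtain B :: "nat \<Rightarrow> 'a set"
    where B: "\<And>i. open (B i)" "\<And>i. 0 \<in> B i" "\<And>f. \<forall>n. f n \<in> B n \<Longrightarrow> f \<longlonglongrightarrow> 0"
    by (rule first_countable_topology_class.countable_basis[of 0]) blast
  have "\<exists>j. j \<noteq> 0 \<and> smul (inverse (of_nat j)) (e n) \<in> B n" for n
  proof -
    have "(\<lambda>j. sm (inverse (of_nat j)) (e n)) \<longlonglongrightarrow> sm 0 (e n)"
      using inverse_of_nat_in_K[of 0]
      by (intro tendsto_sm lim_inverse_n tendsto_const always_eventually allI inverse_of_nat_in_K) simp
    moreover have "sm 0 (e n) = 0"
      using alg.scale_zero_left[of "e n"] by (simp add: smul_def)
    ultimately have "\<forall>\<^sub>F j in sequentially. smul (inverse (of_nat j)) (e n) \<in> B n"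
      using B(1,2) topological_tendstoD by (fastforce simp: smul_def)
    then have "\<forall>\<^sub>F j in sequentially. j \<noteq> 0 \<and> smul (inverse (of_nat j)) (e n) \<in> B n"
      using eventually_gt_at_top[of "0::nat"] by eventually_elim simp
    then show ?thesis
      by (auto dest: eventually_happens)
  qed
  then obtain j where j: "\<And>n. j n \<noteq> 0 \<and> smul (inverse (of_nat (j n))) (e n) \<in> B n"
    by metis
  show thesis
  proof
    show "inverse (of_nat (j n)) \<noteq> (0::'c)" for n
      using j[of n] emb_eq_0_iff[of "of_nat (j n)"] by auto
    show "(\<lambda>n. smul (inverse (of_nat (j n))) (e n)) \<longlonglongrightarrow> 0"
      using j by (intro B(3)) simp
  qed
qed

end

section \<open>Splitting a free dense generating set\<close>

lemma infinite_times_eqpoll: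
  assumes "infinite A" "B \<noteq> {}" "B \<lesssim> A"
  shows "A \<times> B \<approx> A"
  using assms card_of_Times_infinite[of A B]
  by (simp add: eqpoll_iff_card_of_ordIso lepoll_def card_of_ordLeq[symmetric])

lemma infinite_times_nat_eqpoll: "infinite A \<Longrightarrow> A \<times> (UNIV :: nat set) \<approx> A"
  by (simp add: infinite_times_eqpoll infinite_le_lepoll)

lemma infinite_times_self_eqpoll: "infinite A \<Longrightarrow> A \<times> A \<approx> A"
  using infinite_times_eqpoll[of A A] by (metis finite.emptyI lepoll_refl)

locale dense_generators_split = topological_K_algebra K sm emb
  for K and sm :: "complex \<Rightarrow> 'a::{comm_ring,first_countable_topology} \<Rightarrow> 'a"
    and emb :: "'c::field \<Rightarrow> complex" +
  fixes A :: "'i set" and F :: "'a set"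
  assumes infinite_A: "infinite A" and SFG_F: "SFG K sm F" and F_eqpoll: "F \<approx> A"
begin

definition nodes :: "(nat \<times> 'i) set" where
  "nodes = UNIV \<times> A"

definition node :: "nat \<times> 'i \<Rightarrow> 'a" where
  "node = (SOME f. bij_betw f nodes F)"

lemma nodes_eqpoll: "nodes \<approx> A"
  unfolding nodes_def
  using eqpoll_trans[OF times_commute_eqpoll infinite_times_nat_eqpoll[OF infinite_A]] .

lemma bij_node: "bij_betw node nodes F"
proof -
  have "\<exists>f. bij_betw f nodes F"
    using eqpoll_trans[OF nodes_eqpoll eqpoll_sym[OF F_eqpoll]] by (auto simp: eqpoll_def)
  then show ?thesis
    unfolding node_def by (rule someI_ex)
qed

definition triples :: "('i \<times> 'i \<times> nat) set" where
  "triples = A \<times> A \<times> UNIV"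

definition code :: "'i \<times> 'i \<times> nat \<Rightarrow> 'i" where
  "code = (SOME f. inj_on f triples \<and> f ` triples \<subseteq> A)"

lemma inj_code: "inj_on code triples" and code_in_A: "code ` triples \<subseteq> A"
proof -
  have "triples \<lesssim> A"
  proof -
    have "A \<times> A \<times> (UNIV :: nat set) \<approx> A \<times> A"
      by (rule times_eqpoll_cong[OF eqpoll_refl infinite_times_nat_eqpoll[OF infinite_A]])
    then show ?thesis
      unfolding triples_def
      by (metis eqpoll_imp_lepoll eqpoll_trans infinite_A infinite_times_self_eqpoll)
  qed
  then have "inj_on code triples \<and> code ` triples \<subseteq> A"
    unfolding code_def lepoll_def by (rule someI_ex)
  then show "inj_on code triples" "code ` triples \<subseteq> A"
    by auto
qed

text \<open>The nodes form a forest: level-0 nodes are roots, and every node \<open>(l, a)\<close> has one child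
  on level \<open>Suc l\<close> for each \<open>k \<in> A\<close> and \<open>n\<close>, while by injectivity of \<open>code\<close> each node of
  positive level has exactly one parent.\<close>

definition child :: "nat \<times> 'i \<Rightarrow> 'i \<Rightarrow> nat \<Rightarrow> nat \<times> 'i" where
  "child v k n = (Suc (fst v), code (snd v, k, n))"

lemma child_in_nodes: "v \<in> nodes \<Longrightarrow> k \<in> A \<Longrightarrow> child v k n \<in> nodes"
  using code_in_A by (auto simp: child_def nodes_def triples_def)

definition coef :: "'i \<Rightarrow> nat \<times> 'i \<Rightarrow> nat \<Rightarrow> 'c" where
  "coef k v = (SOME c. (\<forall>n. c n \<noteq> 0) \<and> (\<lambda>n. smul (c n) (node (child v k n))) \<longlonglongrightarrow> 0)"

lemma coef_nonzero: "coef k v n \<noteq> 0"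
  and coef_tendsto: "(\<lambda>n. smul (coef k v n) (node (child v k n))) \<longlonglongrightarrow> 0"
proof -
  have "\<exists>c. (\<forall>n. c n \<noteq> 0) \<and> (\<lambda>n. smul (c n) (node (child v k n))) \<longlonglongrightarrow> 0"
    by (metis obtain_scalars_tendsto_zero)
  then have "(\<forall>n. coef k v n \<noteq> 0) \<and> (\<lambda>n. smul (coef k v n) (node (child v k n))) \<longlonglongrightarrow> 0"
    unfolding coef_def by (rule someI_ex)
  then show "coef k v n \<noteq> 0" "(\<lambda>n. smul (coef k v n) (node (child v k n))) \<longlonglongrightarrow> 0"
    by auto
qed

definition labels :: "('i \<times> (nat \<times> 'i) \<times> nat) set" where
  "labels = A \<times> nodes \<times> UNIV"

definition gen_poly :: "'i \<times> (nat \<times> 'i) \<times> nat \<Rightarrow> ('a, 'c) cpoly" where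
  "gen_poly t = (case t of (k, v, n) \<Rightarrow> pvar (node v) + pscale (coef k v n) (pvar (node (child v k n))))"

definition new_gen :: "'i \<times> (nat \<times> 'i) \<times> nat \<Rightarrow> 'a" where
  "new_gen t = peval smul id (gen_poly t)"

lemma new_gen_eq: "new_gen (k, v, n) = node v + smul (coef k v n) (node (child v k n))"
  by (simp add: new_gen_def gen_poly_def alg.peval_add alg.peval_pscale)

text \<open>Solving \<open>gen_poly (k, v, n) = pvar t\<close> for the variable of the child expresses the generator of
  every node through the new generators, by recursion on the level; the roots are sent to \<open>0\<close>.\<close>

fun node_poly :: "nat \<Rightarrow> 'i \<Rightarrow> ('i \<times> (nat \<times> 'i) \<times> nat, 'c) cpoly" where
  "node_poly 0 a = 0"
| "node_poly (Suc l) b = (case inv_into triples code b of (a, k, n) \<Rightarrow>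
      pscale (inverse (coef k (l, a) n)) (pvar (k, (l, a), n) - node_poly l a))"

definition node_subst :: "'a \<Rightarrow> ('i \<times> (nat \<times> 'i) \<times> nat, 'c) cpoly" where
  "node_subst u = (case inv_into nodes node u of (l, a) \<Rightarrow> node_poly l a)"

lemma const_free_gen_poly: "const_free (gen_poly t)"
  by (simp add: gen_poly_def const_free_add const_free_pscale const_free_pvar split: prod.split)

lemma poly_vars_gen_poly:
  assumes "t \<in> labels"
  shows "poly_vars (gen_poly t) \<subseteq> F"
proof -
  obtain k v n where t: "t = (k, v, n)" and k: "k \<in> A" and v: "v \<in> nodes"
    using assms by (auto simp: labels_def)
  then have "node v \<in> F" "node (child v k n) \<in> F"
    using bij_node child_in_nodes[OF v k] by (auto simp: bij_betw_def)
  moreover have "poly_vars (gen_poly t) \<subseteq> {node v, node (child v k n)}"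
    using poly_vars_add poly_vars_pscale by (fastforce simp: gen_poly_def t)
  ultimately show ?thesis
    by blast
qed

lemma node_subst_gen_poly:
  assumes "t \<in> labels"
  shows "peval pscale node_subst (gen_poly t) = pvar t"
proof -
  obtain k l a n where t: "t = (k, (l, a), n)" and k: "k \<in> A" and a: "a \<in> A"
    using assms by (auto simp: labels_def nodes_def)
  define c where "c = coef k (l, a) n"
  have parent: "(l, a) \<in> nodes" and child: "child (l, a) k n \<in> nodes"
    using a k child_in_nodes by (auto simp: nodes_def)
  have "inv_into triples code (code (a, k, n)) = (a, k, n)"
    using inj_code a k by (simp add: triples_def)
  then have "node_subst (node (child (l, a) k n)) = pscale (inverse c) (pvar t - node_poly l a)"
    using bij_node child by (simp add: node_subst_def bij_betw_def c_def t child_def)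
  moreover have "node_subst (node (l, a)) = node_poly l a"
    using bij_node parent by (simp add: node_subst_def bij_betw_def)
  ultimately have "peval pscale node_subst (gen_poly t)
      = node_poly l a + pscale c (pscale (inverse c) (pvar t - node_poly l a))"
    by (simp add: gen_poly_def t c_def pscale.peval_add pscale.peval_pscale)
  also have "\<dots> = pvar t"
    using coef_nonzero[of k "(l, a)" n] by (simp add: c_def)
  finally show ?thesis .
qed

lemma inj_on_new_gen: "inj_on new_gen labels"
  and alg_independent_new_gens: "alg_independent smul (new_gen ` labels)"
  using alg.alg_independent_subst_image[OF SFG_imp_alg_independent[OF SFG_F] const_free_gen_poly
      poly_vars_gen_poly node_subst_gen_poly]
  by (simp_all add: new_gen_def[abs_def])

definition piece :: "'i \<Rightarrow> 'a set" where
  "piece k = new_gen ` ({k} \<times> nodes \<times> UNIV)"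

lemma piece_subset: "k \<in> A \<Longrightarrow> piece k \<subseteq> new_gen ` labels"
  by (auto simp: piece_def labels_def)

lemma SFG_piece: "k \<in> A \<Longrightarrow> SFG K sm (piece k)"
  by (rule alg_independent_imp_SFG[OF alg_independent_subset[OF alg_independent_new_gens piece_subset]])

lemma piece_eqpoll:
  assumes "k \<in> A"
  shows "piece k \<approx> A"
proof -
  have "inj_on new_gen ({k} \<times> nodes \<times> UNIV)"
    by (rule inj_on_subset[OF inj_on_new_gen]) (use assms in \<open>auto simp: labels_def\<close>)
  then have "piece k \<approx> {k} \<times> nodes \<times> (UNIV :: nat set)"
    unfolding piece_def by (rule inj_on_image_eqpoll_self)
  also have "\<dots> \<approx> nodes \<times> (UNIV :: nat set)"
    by (rule times_singleton_eqpoll)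
  also have "\<dots> \<approx> A \<times> (UNIV :: nat set)"
    by (rule times_eqpoll_cong[OF nodes_eqpoll eqpoll_refl])
  also have "\<dots> \<approx> A"
    by (rule infinite_times_nat_eqpoll[OF infinite_A])
  finally show ?thesis .
qed

lemma gen_alg_piece_Int:
  assumes "k1 \<in> A" "k2 \<in> A" "k1 \<noteq> k2"
  shows "gen_alg K sm (piece k1) \<inter> gen_alg K sm (piece k2) = {0}"
proof (rule gen_alg_Int_eq_zero[OF alg_independent_new_gens piece_subset piece_subset])
  show "piece k1 \<inter> piece k2 = {}"
  proof (rule equals0I)
    fix g assume "g \<in> piece k1 \<inter> piece k2"
    then obtain v n v' n' where "v \<in> nodes" "v' \<in> nodes"
      and "new_gen (k1, v, n) = new_gen (k2, v', n')"
      by (auto simp: piece_def)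
    then have "(k1, v, n) = (k2, v', n')"
      using inj_onD[OF inj_on_new_gen, of "(k1, v, n)" "(k2, v', n')"] assms(1,2)
      by (simp add: labels_def)
    then show False
      using assms(3) by simp
  qed
qed (use assms in auto)

lemma piece_subset_gen_alg:
  assumes "k \<in> A"
  shows "piece k \<subseteq> gen_alg K sm F"
proof
  fix g assume "g \<in> piece k"
  then obtain v n where v: "v \<in> nodes" and g: "g = new_gen (k, v, n)"
    by (auto simp: piece_def)
  have "node v \<in> gen_alg K sm F" "node (child v k n) \<in> gen_alg K sm F"
    using bij_node child_in_nodes[OF v assms] v subset_gen_alg[of F K sm]
    by (auto simp: bij_betw_def)
  then show "g \<in> gen_alg K sm F"
    using gen_alg_is_subalg[of K sm F] K_eq
    by (simp add: g new_gen_eq smul_def is_subalg_def)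
qed

lemma subset_closure_gen_alg_piece:
  assumes "k \<in> A"
  shows "F \<subseteq> closure (gen_alg K sm (piece k))"
proof
  fix f assume "f \<in> F"
  define v where "v = inv_into nodes node f"
  have v: "v \<in> nodes" "node v = f"
    using bij_node \<open>f \<in> F\<close> unfolding v_def bij_betw_def by (auto intro: inv_into_into f_inv_into_f)
  have "(\<lambda>n. node v + smul (coef k v n) (node (child v k n))) \<longlonglongrightarrow> node v + 0"
    by (intro tendsto_add_alg tendsto_const coef_tendsto)
  then have "(\<lambda>n. new_gen (k, v, n)) \<longlonglongrightarrow> f"
    by (simp add: new_gen_eq v(2))
  moreover have "new_gen (k, v, n) \<in> closure (gen_alg K sm (piece k))" for n
    using v(1) subset_gen_alg[of "piece k" K sm] closure_subset by (fastforce simp: piece_def)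
  ultimately show "f \<in> closure (gen_alg K sm (piece k))"
    by (intro Lim_in_closed_set[OF closed_closure always_eventually]) auto
qed

lemma dense_free_subalg_piece:
  assumes "closure (gen_alg K sm F) = UNIV" "k \<in> A"
  shows "dense_free_subalg K sm A (gen_alg K sm (piece k))"
  unfolding dense_free_subalg_def
proof (intro conjI exI)
  show "SFG K sm (piece k)" "piece k \<approx> A"
    using assms(2) by (rule SFG_piece, rule piece_eqpoll)
  show "closure (gen_alg K sm (piece k)) = UNIV"
    by (rule dense_gen_alg_if_generators_in_closure[OF subset_closure_gen_alg_piece[OF assms(2)] assms(1)])
qed simp

end

context topological_K_algebra
begin

lemma inf_strongly_dense_algebrable_if_strongly:
  assumes "infinite A" "strongly_dense_algebrable K sm A M"
  shows "inf_strongly_dense_algebrable K sm A M"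
proof -
  obtain F where F: "SFG K sm F" "F \<approx> A" "closure (gen_alg K sm F) = UNIV"
    and F_M: "gen_alg K sm F \<subseteq> M \<union> {0}"
    using assms(2) by (auto simp: strongly_dense_algebrable_def dense_free_subalg_def)
  interpret dense_generators_split K sm emb A F
    using assms(1) F(1,2) by unfold_locales
  show ?thesis
    unfolding inf_strongly_dense_algebrable_def
  proof (intro exI[of _ "\<lambda>k. gen_alg K sm (piece k)"] conjI ballI impI)
    fix k assume "k \<in> A"
    show "dense_free_subalg K sm A (gen_alg K sm (piece k))"
      by (rule dense_free_subalg_piece[OF F(3) \<open>k \<in> A\<close>])
    show "gen_alg K sm (piece k) \<subseteq> M \<union> {0}"
      using gen_alg_least[OF gen_alg_is_subalg piece_subset_gen_alg[OF \<open>k \<in> A\<close>]] F_M by blast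
  qed (rule gen_alg_piece_Int)
qed

end

lemma strongly_dense_algebrable_if_inf:
  assumes "A \<noteq> {}" "inf_strongly_dense_algebrable K sm A M"
  shows "strongly_dense_algebrable K sm A M"
  using assms by (auto simp: inf_strongly_dense_algebrable_def strongly_dense_algebrable_def)

theorem theorem4p7:
  fixes K :: "complex set" and sm :: "complex \<Rightarrow> 'a::{comm_ring,first_countable_topology} \<Rightarrow> 'a"
    and A :: "'i set" and M :: "'a set"
  assumes "K = \<real> \<or> K = UNIV"
    and "infinite A"
    and "topological_algebra K sm"
    and "alpha_generated K sm A"
  shows "inf_strongly_dense_algebrable K sm A M \<longleftrightarrow> strongly_dense_algebrable K sm A M"
proof
  show "inf_strongly_dense_algebrable K sm A M \<Longrightarrow> strongly_dense_algebrable K sm A M"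
    using assms(2) by (intro strongly_dense_algebrable_if_inf) auto
next
  assume strongly: "strongly_dense_algebrable K sm A M"
  from assms(1) show "inf_strongly_dense_algebrable K sm A M"
  proof
    assume "K = \<real>"
    then interpret topological_K_algebra K sm "of_real :: real \<Rightarrow> complex"
      using assms(3) by unfold_locales (simp_all add: Reals_def inj_of_real)
    show ?thesis
      using assms(2) strongly by (rule inf_strongly_dense_algebrable_if_strongly)
  next
    assume "K = UNIV"
    then interpret topological_K_algebra K sm "id :: complex \<Rightarrow> complex"
      using assms(3) by unfold_locales simp_all
    show ?thesis
      using assms(2) strongly by (rule inf_strongly_dense_algebrable_if_strongly)
  qed
qed

end
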